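(* Let $G$ be a finite connected simple graph. Then the connected subgraph arrangement $\mathcal{A}_G$ (with its defining forms considered over $\mathbb{R}$) is simplicial if and only if $G$ is a triangle (the cycle $C_3$) or a path graph.
   Context: For a finite simple graph $G=(N,E)$ with $N=\{1,\dots,n\}$ and $I\subseteq N$, $G[I]$ denotes the induced subgraph on $I$, and $H_I=\ker\big(\sum_{i\in I}x_i\big)$, where $x_1,\dots,x_n$ are the coordinate functions. The connected subgraph arrangement of $G$ is $\mathcal{A}_G=\{H_I:\emptyset\neq I\subseteq N,\ G[I]\text{ connected}\}$. An arrangement of hyperplanes in $\mathbb{R}^n$ is simplicial if every connected component of the complement of the union of its hyperplanes is an open simplicial cone. *)

theory Defs
  imports "HOL-Analysis.Analysis"
begin

text \<open>A finite simple graph on the vertex type 'n (finite), given by an edge relation.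
  Vertices index the coordinates of real^'n.\<close>

definition simple_graph :: "('n::finite \<Rightarrow> 'n \<Rightarrow> bool) \<Rightarrow> bool" where
  "simple_graph E \<longleftrightarrow> (\<forall>u v. E u v \<longrightarrow> E v u) \<and> (\<forall>u. \<not> E u u)"

definition induced_connected :: "('n::finite \<Rightarrow> 'n \<Rightarrow> bool) \<Rightarrow> 'n set \<Rightarrow> bool" where
  "induced_connected E I \<longleftrightarrow> I \<noteq> {} \<and>
     (\<forall>u\<in>I. \<forall>v\<in>I. (\<lambda>a b. a \<in> I \<and> b \<in> I \<and> E a b)\<^sup>*\<^sup>* u v)"

definition graph_connected :: "('n::finite \<Rightarrow> 'n \<Rightarrow> bool) \<Rightarrow> bool" where
  "graph_connected E \<longleftrightarrow> induced_connected E UNIV"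

definition hyp :: "'n::finite set \<Rightarrow> (real^'n) set" where
  "hyp I = {x. (\<Sum>i\<in>I. x $ i) = 0}"

definition connected_subgraph_arrangement :: "('n::finite \<Rightarrow> 'n \<Rightarrow> bool) \<Rightarrow> (real^'n) set set" where
  "connected_subgraph_arrangement E = {hyp I | I. I \<noteq> {} \<and> induced_connected E I}"

definition open_simplicial_cone :: "(real^'n::finite) set \<Rightarrow> bool" where
  "open_simplicial_cone C \<longleftrightarrow> (\<exists>B. independent B \<and> card B = CARD('n) \<and>
      C = {(\<Sum>b\<in>B. c b *\<^sub>R b) | c. \<forall>b\<in>B. c b > 0})"

definition simplicial_arrangement :: "(real^'n::finite) set set \<Rightarrow> bool" where
  "simplicial_arrangement A \<longleftrightarrow>
     (\<forall>C\<in>components (UNIV - \<Union>A). open_simplicial_cone C)"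

definition is_triangle :: "('n::finite \<Rightarrow> 'n \<Rightarrow> bool) \<Rightarrow> bool" where
  "is_triangle E \<longleftrightarrow> CARD('n) = 3 \<and> (\<forall>u v. E u v \<longleftrightarrow> u \<noteq> v)"

definition is_path_graph :: "('n::finite \<Rightarrow> 'n \<Rightarrow> bool) \<Rightarrow> bool" where
  "is_path_graph E \<longleftrightarrow> (\<exists>p::'n \<Rightarrow> nat. bij_betw p UNIV {0..<CARD('n)} \<and>
      (\<forall>u v. E u v \<longleftrightarrow> (p u = p v + 1 \<or> p v = p u + 1)))"

end

theory Submission
  imports Defs
begin

text \<open>The complement of the arrangement splits into chambers, each described by the signs of
  the subset sums of a generic point. A chamber is a simplicial cone only if its wall functionals
  are linearly independent. If G has a vertex v with three neighbours a, b, c, the connected sets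
  \<open>{v, a, b}, {v, b}, {v, a, c}, {v, c}\<close> are walls of a suitable chamber, and
  \<open>{v, a, b} + {v, c} = {v, b} + {v, a, c}\<close> is a linear dependency among their sums; in a cycle
  of length at least four with vertices u, w at distance two the same happens with
  \<open>{u} + (V - {u}) = {w} + (V - {w})\<close>. So a simplicial G has maximum degree two and is a path or
  the triangle. Conversely, for a path the connected sets are the intervals, whose sums are
  differences of the prefix sums \<open>P\<^sub>0 = 0, P\<^sub>1, \<dots>, P\<^sub>n\<close>; a chamber fixes the order of the
  \<open>P\<^sub>k\<close> and is cut out by the consecutive differences in that order. For the triangle every
  nonempty set is connected, and up to symmetry there are five kinds of chambers, each cut out by
  three independent subset sums.\<close>

section \<open>Chambers of subset-sum arrangements\<close>

definition subset_sum :: "'n::finite set \<Rightarrow> real^'n \<Rightarrow> real" where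
  "subset_sum J x = (\<Sum>i\<in>J. x $ i)"

definition chamber :: "'n::finite set set \<Rightarrow> real^'n \<Rightarrow> (real^'n) set" where
  "chamber F x0 = {x. \<forall>J\<in>F. 0 < subset_sum J x * subset_sum J x0}"

lemma linear_subset_sum: "linear (subset_sum J)"
  by (rule linearI) (simp_all add: subset_sum_def sum.distrib sum_distrib_left)

lemma subset_sum_add: "subset_sum J (x + y) = subset_sum J x + subset_sum J y"
  and subset_sum_scale: "subset_sum J (c *\<^sub>R x) = c * subset_sum J x"
  and subset_sum_uminus: "subset_sum J (- x) = - subset_sum J x"
  using linear_subset_sum[of J] by (simp_all add: linear_add linear_scale linear_neg)

lemma subset_sum_axis: "subset_sum J (axis i 1) = (if i \<in> J then 1 else 0)"
  by (simp add: subset_sum_def axis_def sum.If_cases)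

lemma subset_sum_union_inter:
  "subset_sum A x + subset_sum B x = subset_sum (A \<union> B) x + subset_sum (A \<inter> B) x"
  unfolding subset_sum_def by (simp add: sum.union_inter)

lemma convex_chamber: "convex (chamber F x0)"
  unfolding convex_def chamber_def
proof (intro ballI allI impI CollectI)
  fix x y J and u v :: real
  assume x: "x \<in> {x. \<forall>J\<in>F. 0 < subset_sum J x * subset_sum J x0}"
    and y: "y \<in> {x. \<forall>J\<in>F. 0 < subset_sum J x * subset_sum J x0}"
    and uv: "0 \<le> u" "0 \<le> v" "u + v = 1" and J: "J \<in> F"
  have "0 < u * (subset_sum J x * subset_sum J x0) + v * (subset_sum J y * subset_sum J x0)"
    using x y J uv by (cases "u = 0") (auto intro!: add_pos_nonneg)
  then show "0 < subset_sum J (u *\<^sub>R x + v *\<^sub>R y) * subset_sum J x0"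
    by (simp add: subset_sum_add subset_sum_scale algebra_simps)
qed

lemma connected_component_eq_chamber:
  assumes x0: "\<forall>J\<in>F. subset_sum J x0 \<noteq> 0"
  shows "connected_component_set (UNIV - \<Union>(hyp ` F)) x0 = chamber F x0"
proof
  let ?S = "UNIV - \<Union>(hyp ` F)"
  let ?K = "connected_component_set ?S x0"
  have S: "?S = {x. \<forall>J\<in>F. subset_sum J x \<noteq> 0}"
    by (auto simp: hyp_def subset_sum_def)
  show "chamber F x0 \<subseteq> ?K"
  proof (rule connected_component_maximal)
    show "x0 \<in> chamber F x0"
      using x0 by (auto simp: chamber_def zero_less_mult_iff linorder_neq_iff)
    show "connected (chamber F x0)"
      by (simp add: convex_connected convex_chamber)
  qed (auto simp: S chamber_def)
  show "?K \<subseteq> chamber F x0"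
  proof (unfold chamber_def, intro subsetI CollectI ballI)
    fix y J assume y: "y \<in> ?K" and J: "J \<in> F"
    have x0K: "x0 \<in> ?K"
      using x0 S by simp
    have nz: "subset_sum J z \<noteq> 0" if "z \<in> ?K" for z
      using connected_component_subset[of ?S x0] that J S by blast
    \<comment> \<open>the connected image of the component under a nowhere-vanishing form cannot change sign\<close>
    have "connected (subset_sum J ` ?K)"
      by (intro connected_continuous_image connected_connected_component
          linear_continuous_on linear_conv_bounded_linear[THEN iffD1] linear_subset_sum)
    then have ivt: "z \<in> subset_sum J ` ?K"
      if "a \<in> ?K" "b \<in> ?K" "subset_sum J a \<le> z" "z \<le> subset_sum J b" for a b z
      using that unfolding connected_iff_interval by blast
    show "0 < subset_sum J y * subset_sum J x0"
      by (rule ccontr) (use ivt[of y x0 0] ivt[of x0 y 0] nz y x0K in \<open>auto simp: not_less mult_le_0_iff\<close>)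
  qed
qed

lemma components_complement_eq_chambers:
  "components (UNIV - \<Union>(hyp ` F)) = chamber F ` {x0. \<forall>J\<in>F. subset_sum J x0 \<noteq> 0}"
proof -
  have S: "UNIV - \<Union>(hyp ` F) = {x0. \<forall>J\<in>F. subset_sum J x0 \<noteq> 0}"
    by (auto simp: hyp_def subset_sum_def)
  show ?thesis
    unfolding components_def S[symmetric]
    by (rule image_cong[OF refl], rule connected_component_eq_chamber) (simp add: S)
qed

section \<open>Simplicial cones and their walls\<close>

lemma open_simplicial_cone_representation:
  assumes "open_simplicial_cone C"
  obtains B :: "(real^'n::finite) set"
  where "independent B" "span B = UNIV" "C = {x. \<forall>b\<in>B. 0 < representation B x b}"
proof -
  obtain B where B: "independent B" "card B = CARD('n)"
    and C: "C = {(\<Sum>b\<in>B. c b *\<^sub>R b) | c. \<forall>b\<in>B. 0 < c b}"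
    using assms unfolding open_simplicial_cone_def by blast
  have fin: "finite B"
    using B(1) by (rule finiteI_independent)
  have span: "span B = UNIV"
    using card_eq_dim[of B UNIV] B fin by (auto simp: dim_UNIV)
  have "C = {x. \<forall>b\<in>B. 0 < representation B x b}"
  proof (intro set_eqI iffI)
    fix x assume "x \<in> C"
    then obtain c where c: "\<forall>b\<in>B. 0 < c b" and x: "x = (\<Sum>b\<in>B. c b *\<^sub>R b)"
      using C by blast
    have supp: "{b. (if b \<in> B then c b else 0) \<noteq> 0} = B"
      using c by force
    have "representation B x = (\<lambda>b. if b \<in> B then c b else 0)"
      by (rule representation_eqI[OF B(1)]) (auto simp: span x supp fin split: if_splits)
    then show "x \<in> {x. \<forall>b\<in>B. 0 < representation B x b}"
      using c by simp
  next
    fix x assume "x \<in> {x. \<forall>b\<in>B. 0 < representation B x b}"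
    moreover have "(\<Sum>b\<in>B. representation B x b *\<^sub>R b) = x"
      by (rule sum_representation_eq[OF B(1)]) (auto simp: span fin)
    ultimately show "x \<in> C"
      unfolding C by (intro CollectI exI[of _ "representation B x"]) auto
  qed
  with B(1) span show ?thesis
    using that by blast
qed

definition linear_orthant :: "(real^'n::finite) set \<Rightarrow> bool" where
  "linear_orthant (C :: (real^'n) set) \<longleftrightarrow>
     (\<exists>G :: real^'n \<Rightarrow> real^'n. linear G \<and> inj G \<and> C = {x. \<forall>i. 0 < G x $ i})"

lemma open_simplicial_cone_if_linear_orthant:
  fixes C :: "(real^'n::finite) set"
  assumes "linear_orthant C"
  shows "open_simplicial_cone C"
proof -
  obtain G :: "real^'n \<Rightarrow> real^'n" where G: "linear G" "inj G" and C: "C = {x. \<forall>i. 0 < G x $ i}"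
    using assms unfolding linear_orthant_def by blast
  obtain H where H: "linear H" "\<And>x. H (G x) = x" "\<And>y. G (H y) = y"
    using linear_injective_isomorphism[OF G] by blast
  define h where "h i = H (axis i 1)" for i
  have inj_h: "inj h"
    by (rule injI) (metis H(3) h_def axis_eq_axis zero_neq_one)
  define B where "B = range h"
  have sum_B: "(\<Sum>b\<in>B. c b *\<^sub>R b) = H (\<chi> i. c (h i))" for c
  proof -
    have "(\<Sum>b\<in>B. c b *\<^sub>R b) = (\<Sum>i\<in>UNIV. c (h i) *\<^sub>R h i)"
      by (simp add: B_def sum.reindex[OF inj_h])
    also have "\<dots> = H (\<Sum>i\<in>UNIV. c (h i) *\<^sub>R axis i 1)"
      by (simp add: h_def linear_sum[OF H(1)] linear_scale[OF H(1)])
    also have "(\<Sum>i\<in>UNIV. c (h i) *\<^sub>R axis i 1) = (\<chi> i. c (h i))"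
      using basis_expansion[of "\<chi> i. c (h i)"] by (simp add: scalar_mult_eq_scaleR)
    finally show ?thesis .
  qed
  have rep: "x = (\<Sum>b\<in>B. (G x $ inv h b) *\<^sub>R b)" for x
    by (simp add: sum_B inv_f_f[OF inj_h] H(2))
  have "x \<in> span B" for x
    by (subst rep[of x]) (intro span_sum span_scale span_base)
  then have span: "span B = UNIV"
    by auto
  have card: "card B = CARD('n)"
    by (simp add: B_def card_image[OF inj_h])
  have "independent B"
    using card_eq_dim[of B UNIV] span card by (auto simp: B_def dim_UNIV)
  moreover have "C = {(\<Sum>b\<in>B. c b *\<^sub>R b) | c. \<forall>b\<in>B. 0 < c b}"
  proof (intro set_eqI iffI)
    fix x assume "x \<in> C"
    then show "x \<in> {(\<Sum>b\<in>B. c b *\<^sub>R b) | c. \<forall>b\<in>B. 0 < c b}"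
      using rep[of x] by (auto simp: C B_def inv_f_f[OF inj_h] intro!: exI[of _ "\<lambda>b. G x $ inv h b"])
  next
    fix x assume "x \<in> {(\<Sum>b\<in>B. c b *\<^sub>R b) | c. \<forall>b\<in>B. 0 < c b}"
    then obtain c where c: "\<forall>b\<in>B. 0 < c b" and "x = (\<Sum>b\<in>B. c b *\<^sub>R b)"
      by blast
    then have "G x = (\<chi> i. c (h i))"
      by (simp only: sum_B H(3))
    with c show "x \<in> C"
      by (simp add: C B_def)
  qed
  ultimately show ?thesis
    unfolding open_simplicial_cone_def using card by blast
qed

lemma linear_orthant_of_forms:
  fixes g :: "'n::finite \<Rightarrow> real^'n \<Rightarrow> real"
  assumes "\<And>i. linear (g i)" and "\<And>x. (\<And>i. g i x = 0) \<Longrightarrow> x = 0"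
  shows "linear_orthant {x. \<forall>i. 0 < g i x}"
proof -
  define G where "G x = (\<chi> i. g i x)" for x
  have "linear G"
    by (rule linearI) (simp_all add: G_def vec_eq_iff linear_add[OF assms(1)] linear_scale[OF assms(1)])
  moreover have "inj G"
    using assms(2) by (simp add: linear_injective_0[OF \<open>linear G\<close>] G_def vec_eq_iff)
  ultimately show ?thesis
    unfolding linear_orthant_def by (auto simp: G_def)
qed

lemma linear_orthant_uminus:
  fixes C :: "(real^'n::finite) set"
  assumes "linear_orthant C"
  shows "linear_orthant {x. - x \<in> C}"
proof -
  obtain G :: "real^'n \<Rightarrow> real^'n" where G: "linear G" "inj G" and C: "C = {x. \<forall>i. 0 < G x $ i}"
    using assms unfolding linear_orthant_def by blast
  have "linear (G \<circ> uminus)" "inj (G \<circ> uminus)"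
    using G by (auto intro: linear_compose linear_uminus inj_compose)
  then show ?thesis
    unfolding linear_orthant_def C by (intro exI[of _ "G \<circ> uminus"]) auto
qed

lemma positive_multiple_if_positive_on_halfspace:
  fixes g h :: "real^'n::finite \<Rightarrow> real"
  assumes g: "linear g" and h: "linear h" and w: "0 < g w"
    and pos: "\<And>v. 0 < g v \<Longrightarrow> 0 < h v"
  shows "\<exists>c>0. \<forall>x. h x = c * g x"
proof -
  have ker: "h y = 0" if "g y = 0" for y
  proof (rule ccontr)
    assume "h y \<noteq> 0"
    \<comment> \<open>moving from w along the kernel of g would make h negative\<close>
    define t where "t = - (h w + 1) / h y"
    have "0 < h (w + t *\<^sub>R y)"
      using pos[of "w + t *\<^sub>R y"] w that by (simp add: linear_add[OF g] linear_scale[OF g])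
    moreover have "h (w + t *\<^sub>R y) = -1"
      using \<open>h y \<noteq> 0\<close> by (simp add: t_def linear_add[OF h] linear_scale[OF h])
    ultimately show False
      by simp
  qed
  show ?thesis
  proof (intro exI conjI allI)
    show "0 < h w / g w"
      using pos[OF w] w by simp
    fix x
    have "h (x - (g x / g w) *\<^sub>R w) = 0"
      using w by (intro ker) (simp add: linear_diff[OF g] linear_scale[OF g])
    then show "h x = h w / g w * g x"
      by (simp add: linear_diff[OF h] linear_scale[OF h])
  qed
qed

definition is_wall :: "(real^'n::finite) set \<Rightarrow> (real^'n \<Rightarrow> real) \<Rightarrow> bool" where
  "is_wall C g \<longleftrightarrow> linear g \<and> (\<exists>w. 0 < g w) \<and>
     (\<exists>p r. g p = 0 \<and> 0 < r \<and> (\<forall>q\<in>ball p r. q \<in> C \<longleftrightarrow> 0 < g q))"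

lemma positive_if_positive_near_hyperplane:
  fixes g h :: "real^'n::finite \<Rightarrow> real"
  assumes g: "linear g" and h: "linear h" and p: "g p = 0" "h p \<le> 0" and r: "0 < r"
    and near: "\<And>q. q \<in> ball p r \<Longrightarrow> 0 < g q \<Longrightarrow> 0 < h q" and v: "0 < g v"
  shows "0 < h v"
proof -
  define t where "t = r / (2 * (norm v + 1))"
  have t: "0 < t"
    using r by (simp add: t_def add_nonneg_pos)
  have "norm v + 1 \<noteq> 0"
    by (smt (verit) norm_ge_zero)
  have "norm (t *\<^sub>R v) \<le> t * (norm v + 1)"
    using t by simp
  also have "\<dots> = r / 2"
    using \<open>norm v + 1 \<noteq> 0\<close> by (simp add: t_def field_simps)
  also have "\<dots> < r"
    using r by simp
  finally have "norm (t *\<^sub>R v) < r" .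
  then have "0 < h (p + t *\<^sub>R v)"
    using near[of "p + t *\<^sub>R v"] v t p by (simp add: dist_norm linear_add[OF g] linear_scale[OF g])
  then have "0 < t * h v"
    using p(2) by (simp add: linear_add[OF h] linear_scale[OF h])
  then show ?thesis
    using t by (simp add: zero_less_mult_iff)
qed

lemma is_wall_coordinate:
  assumes B: "independent B" "span B = UNIV" and C: "C = {x. \<forall>b\<in>B. 0 < representation B x b}"
    and wall: "is_wall C g"
  shows "\<exists>b\<in>B. \<exists>c>0. \<forall>x. representation B x b = c * g x"
proof -
  obtain w p r where g: "linear g" and w: "0 < g w" and p: "g p = 0" and r: "0 < r"
    and ball: "\<And>q. q \<in> ball p r \<Longrightarrow> q \<in> C \<longleftrightarrow> 0 < g q"
    using wall unfolding is_wall_def by blast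
  have "p \<notin> C"
    using ball[of p] p r by simp
  then obtain b where b: "b \<in> B" "representation B p b \<le> 0"
    using C by (auto simp: not_less)
  have lin: "linear (\<lambda>x. representation B x b)"
    by (rule linearI) (simp_all add: representation_add[OF B(1)] representation_scale[OF B(1)] B(2))
  have "\<exists>c>0. \<forall>x. representation B x b = c * g x"
  proof (rule positive_multiple_if_positive_on_halfspace[OF g lin w])
    have near: "0 < representation B q b" if "q \<in> ball p r" "0 < g q" for q
      using ball[OF that(1)] that(2) b(1) C by simp
    fix v assume "0 < g v"
    then show "0 < representation B v b"
      using positive_if_positive_near_hyperplane[OF g lin p b(2) r near] by simp
  qed
  then show ?thesis
    using b by blast
qed

lemma simplicial_cone_wall_dual_vector:
  assumes "open_simplicial_cone C" and "is_wall C g"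
  obtains v where "g v \<noteq> 0"
    and "\<And>h. is_wall C h \<Longrightarrow> (\<And>c. h \<noteq> (\<lambda>x. c * g x)) \<Longrightarrow> h v = 0"
proof -
  obtain B where B: "independent B" "span B = UNIV"
    and C: "C = {x. \<forall>b\<in>B. 0 < representation B x b}"
    using open_simplicial_cone_representation[OF assms(1)] by blast
  obtain b c where b: "b \<in> B" and c: "0 < c" and bc: "\<And>x. representation B x b = c * g x"
    using is_wall_coordinate[OF B C assms(2)] by blast
  have dual: "representation B b b' = (if b' = b then 1 else 0)" for b'
    using representation_basis[OF B(1) b] by simp
  show thesis
  proof (rule that[of b])
    show "g b \<noteq> 0"
      using bc[of b] dual[of b] by auto
    fix h assume h: "is_wall C h" and not_multiple: "\<And>c. h \<noteq> (\<lambda>x. c * g x)"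
    obtain b' c' where b': "b' \<in> B" and c': "0 < c'" and bc': "\<And>x. representation B x b' = c' * h x"
      using is_wall_coordinate[OF B C h] by blast
    have "b' \<noteq> b"
    proof
      assume "b' = b"
      then have "h = (\<lambda>x. (c / c') * g x)"
        using bc bc' c' by (auto simp: field_simps)
      with not_multiple show False
        by blast
    qed
    then show "h b = 0"
      using bc'[of b] dual[of b'] c' by simp
  qed
qed

definition wall_point :: "'n::finite set set \<Rightarrow> real^'n \<Rightarrow> 'n set \<Rightarrow> real^'n \<Rightarrow> bool" where
  "wall_point F x0 K p \<longleftrightarrow>
     subset_sum K p = 0 \<and> (\<forall>J\<in>F - {K}. 0 < subset_sum J p * subset_sum J x0)"

lemma is_wall_chamber:
  assumes K: "K \<in> F" "K \<noteq> {}" and x0: "subset_sum K x0 \<noteq> 0" and p: "wall_point F x0 K p"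
  shows "is_wall (chamber F x0) (\<lambda>x. subset_sum K x * subset_sum K x0)"
proof -
  have "\<forall>\<^sub>F q in nhds p. \<forall>J\<in>F - {K}. 0 < subset_sum J q * subset_sum J x0"
  proof (rule eventually_ball_finite)
    show "\<forall>J\<in>F - {K}. \<forall>\<^sub>F q in nhds p. 0 < subset_sum J q * subset_sum J x0"
    proof
      fix J assume "J \<in> F - {K}"
      moreover have "((\<lambda>q. subset_sum J q * subset_sum J x0) \<longlongrightarrow> subset_sum J p * subset_sum J x0) (nhds p)"
        unfolding subset_sum_def by (intro tendsto_intros filterlim_ident)
      ultimately show "\<forall>\<^sub>F q in nhds p. 0 < subset_sum J q * subset_sum J x0"
        using p unfolding wall_point_def by (auto intro: order_tendstoD)
    qed
  qed (rule finite_subset[of _ UNIV], auto)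
  then obtain r where r: "0 < r"
    and near: "\<And>q. dist q p < r \<Longrightarrow> \<forall>J\<in>F - {K}. 0 < subset_sum J q * subset_sum J x0"
    unfolding eventually_nhds_metric by blast
  obtain i where "i \<in> K"
    using K(2) by blast
  have "0 < subset_sum K (subset_sum K x0 *\<^sub>R axis i 1) * subset_sum K x0"
    using x0 \<open>i \<in> K\<close> by (auto simp: subset_sum_scale subset_sum_axis zero_less_mult_iff linorder_neq_iff)
  moreover have "q \<in> chamber F x0 \<longleftrightarrow> 0 < subset_sum K q * subset_sum K x0" if "q \<in> ball p r" for q
  proof -
    have "\<forall>J\<in>F - {K}. 0 < subset_sum J q * subset_sum J x0"
      using near that by (simp add: dist_commute)
    then show ?thesis
      using K(1) unfolding chamber_def by blast
  qed
  moreover have "linear (\<lambda>x. subset_sum K x * subset_sum K x0)"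
    by (rule linearI) (simp_all add: subset_sum_add subset_sum_scale algebra_simps)
  moreover have "subset_sum K p * subset_sum K x0 = 0"
    using p by (simp add: wall_point_def)
  ultimately show ?thesis
    unfolding is_wall_def using r by blast
qed

lemma subset_sum_proportional_eq:
  assumes a: "a \<noteq> 0" and J: "J \<noteq> {}" and eq: "\<And>x. a * subset_sum J x = b * subset_sum K x"
  shows "J = K"
proof -
  obtain j where "j \<in> J"
    using J by blast
  then have "a = b" "j \<in> K"
    using eq[of "axis j 1"] a by (auto simp: subset_sum_axis split: if_splits)
  moreover have "i \<in> J \<longleftrightarrow> i \<in> K" for i
    using eq[of "axis i 1"] \<open>a = b\<close> a by (auto simp: subset_sum_axis split: if_splits)
  ultimately show ?thesis
    by blast
qed

text \<open>The hypotheses on union and intersection say \<open>J1 + J4 = J2 + J3\<close> as multisets, a linear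
  dependency among the four walls; the walls of a simplicial cone are independent.\<close>

lemma chamber_not_simplicial_if_dependent_walls:
  assumes F: "\<forall>J\<in>F. J \<noteq> {}" and x0: "\<forall>J\<in>F. subset_sum J x0 \<noteq> 0"
    and J: "J1 \<in> F" "J2 \<in> F" "J3 \<in> F" "J4 \<in> F" and ne: "J1 \<noteq> J2" "J1 \<noteq> J3"
    and un: "J1 \<union> J4 = J2 \<union> J3" and int: "J1 \<inter> J4 = J2 \<inter> J3"
    and p: "wall_point F x0 J1 p1" "wall_point F x0 J2 p2" "wall_point F x0 J3 p3"
      "wall_point F x0 J4 p4"
  shows "\<not> open_simplicial_cone (chamber F x0)"
proof
  assume cone: "open_simplicial_cone (chamber F x0)"
  define g where "g K x = subset_sum K x * subset_sum K x0" for K x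
  have wall: "is_wall (chamber F x0) (g K)" if "K \<in> F" "wall_point F x0 K p" for K p
    unfolding g_def using that F x0 by (intro is_wall_chamber) auto
  obtain v where v: "g J1 v \<noteq> 0"
    and dual: "\<And>h. is_wall (chamber F x0) h \<Longrightarrow> (\<And>c. h \<noteq> (\<lambda>x. c * g J1 x)) \<Longrightarrow> h v = 0"
    using simplicial_cone_wall_dual_vector[OF cone wall[OF J(1) p(1)]] by blast
  have vanish: "subset_sum K v = 0" if "K \<in> F" "wall_point F x0 K p" "K \<noteq> J1" for K p
  proof -
    have "g K \<noteq> (\<lambda>x. c * g J1 x)" for c
    proof
      assume "g K = (\<lambda>x. c * g J1 x)"
      then have "subset_sum K x0 * subset_sum K x = (c * subset_sum J1 x0) * subset_sum J1 x" for x
        unfolding g_def by (metis mult.commute mult.assoc)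
      then have "K = J1"
        using x0 F that(1)
        by (intro subset_sum_proportional_eq[of "subset_sum K x0" K "c * subset_sum J1 x0"]) auto
      with that(3) show False ..
    qed
    then have "g K v = 0"
      using dual wall[OF that(1,2)] by blast
    then show ?thesis
      using x0 that(1) by (simp add: g_def)
  qed
  have "J1 \<noteq> J4"
    using un int ne by blast
  have "subset_sum J1 v + subset_sum J4 v = subset_sum J2 v + subset_sum J3 v"
    using subset_sum_union_inter[of J1 v J4] subset_sum_union_inter[of J2 v J3] by (simp add: un int)
  then have "subset_sum J1 v = 0"
    using vanish[OF J(2) p(2)] vanish[OF J(3) p(3)] vanish[OF J(4) p(4)] ne \<open>J1 \<noteq> J4\<close> by auto
  with v show False
    by (simp add: g_def)
qed

definition connected_subsets :: "('n::finite \<Rightarrow> 'n \<Rightarrow> bool) \<Rightarrow> 'n set set" where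
  "connected_subsets E = {I. induced_connected E I}"

lemma connected_subsets_nonempty: "\<forall>J\<in>connected_subsets E. J \<noteq> {}"
  by (simp add: connected_subsets_def induced_connected_def)

lemma simplicial_connected_subgraph_arrangement_iff:
  "simplicial_arrangement (connected_subgraph_arrangement E) \<longleftrightarrow>
     (\<forall>x0. (\<forall>J\<in>connected_subsets E. subset_sum J x0 \<noteq> 0) \<longrightarrow>
        open_simplicial_cone (chamber (connected_subsets E) x0))"
proof -
  have "connected_subgraph_arrangement E = hyp ` connected_subsets E"
    by (auto simp: connected_subgraph_arrangement_def connected_subsets_def induced_connected_def)
  then show ?thesis
    by (simp add: simplicial_arrangement_def components_complement_eq_chambers)
qed

lemma induced_connected_star:
  assumes "v \<in> J" and "\<And>u. u \<in> J \<Longrightarrow> u = v \<or> E v u \<and> E u v"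
  shows "induced_connected E J"
  unfolding induced_connected_def
proof (intro conjI ballI)
  let ?R = "\<lambda>a b. a \<in> J \<and> b \<in> J \<and> E a b"
  fix x y assume x: "x \<in> J" and y: "y \<in> J"
  have "?R\<^sup>*\<^sup>* x v"
    using assms(2)[OF x] assms(1) x by (auto intro: r_into_rtranclp)
  moreover have "?R\<^sup>*\<^sup>* v y"
    using assms(2)[OF y] assms(1) y by (auto intro: r_into_rtranclp)
  ultimately show "?R\<^sup>*\<^sup>* x y"
    by (rule rtranclp_trans)
qed (use assms in auto)

lemma induced_connected_walk:
  assumes sym: "\<And>x y. E x y \<Longrightarrow> E y x" and walk: "successively E ys" and "ys \<noteq> []"
  shows "induced_connected E (set ys)"
  unfolding induced_connected_def
proof (intro conjI ballI)
  let ?R = "\<lambda>a b. a \<in> set ys \<and> b \<in> set ys \<and> E a b"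
  have symR: "symp ?R\<^sup>*\<^sup>*"
    by (rule symp_rtranclp) (auto intro: sympI sym)
  have reach: "?R\<^sup>*\<^sup>* (ys ! 0) (ys ! i)" if "i < length ys" for i
    using that
  proof (induction i)
    case (Suc i)
    then have "?R (ys ! i) (ys ! Suc i)"
      using successively_nth[OF walk] by auto
    with Suc show ?case
      by (auto intro: rtranclp.rtrancl_into_rtrancl)
  qed simp
  fix a b assume "a \<in> set ys" "b \<in> set ys"
  then obtain i j where "i < length ys" "a = ys ! i" "j < length ys" "b = ys ! j"
    by (auto simp: in_set_conv_nth)
  then show "?R\<^sup>*\<^sup>* a b"
    using sympD[OF symR reach[of i]] reach[of j] by (auto intro: rtranclp_trans)
qed (use assms in simp)

lemma subset_sum_const_outside:
  assumes "\<And>i. i \<notin> I \<Longrightarrow> x $ i = M"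
  shows "subset_sum J x = subset_sum (J \<inter> I) x + M * card (J - I)"
proof -
  have "subset_sum J x = subset_sum (J \<inter> I) x + (\<Sum>i\<in>J - I. x $ i)"
    unfolding subset_sum_def by (metis Int_Diff_Un Int_Diff_disjoint finite sum.union_disjoint)
  also have "(\<Sum>i\<in>J - I. x $ i) = M * card (J - I)"
    using assms by simp
  finally show ?thesis .
qed

section \<open>Two obstructions to simpliciality\<close>

locale degree_three =
  fixes E :: "'n::finite \<Rightarrow> 'n \<Rightarrow> bool" and v a b c :: 'n
  assumes sym: "\<And>x y. E x y \<Longrightarrow> E y x"
    and distinct: "v \<noteq> a" "v \<noteq> b" "v \<noteq> c" "a \<noteq> b" "a \<noteq> c" "b \<noteq> c"
    and edges: "E v a" "E v b" "E v c"
begin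

definition point :: "real \<Rightarrow> real \<Rightarrow> real \<Rightarrow> real \<Rightarrow> real^'n" where
  "point zv za zb zc = (\<chi> i. if i = v then zv else if i = a then za else if i = b then zb
      else if i = c then zc else 100)"

lemma subset_sum_point:
  "subset_sum J (point zv za zb zc) = (if v \<in> J then zv else 0) + (if a \<in> J then za else 0)
     + (if b \<in> J then zb else 0) + (if c \<in> J then zc else 0) + 100 * real (card (J - {v, a, b, c}))"
proof -
  have "subset_sum (J \<inter> {v, a, b, c}) (point zv za zb zc) =
      (\<Sum>i\<in>{v, a, b, c}. if i \<in> J then point zv za zb zc $ i else 0)"
    unfolding subset_sum_def by (simp add: sum.If_cases Int_commute)
  also have "\<dots> = (if v \<in> J then zv else 0) + (if a \<in> J then za else 0)
     + (if b \<in> J then zb else 0) + (if c \<in> J then zc else 0)"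
    using distinct by (simp add: point_def)
  finally show ?thesis
    by (subst subset_sum_const_outside[of "{v, a, b, c}" _ 100]) (auto simp: point_def)
qed

lemma subset_sum_point_pos:
  assumes "\<not> J \<subseteq> {v, a, b, c}" and "\<bar>zv\<bar> + \<bar>za\<bar> + \<bar>zb\<bar> + \<bar>zc\<bar> < 100"
  shows "0 < subset_sum J (point zv za zb zc)"
proof -
  have "1 \<le> card (J - {v, a, b, c})"
    using assms(1) by (simp add: Suc_le_eq card_gt_0_iff)
  then have "100 \<le> 100 * real (card (J - {v, a, b, c}))"
    by simp
  then show ?thesis
    unfolding subset_sum_point using assms(2) by (smt (verit))
qed

lemma subset_sum_point_inside:
  assumes "J \<subseteq> {v, a, b, c}"
  shows "subset_sum J (point zv za zb zc) = (if v \<in> J then zv else 0) + (if a \<in> J then za else 0)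
     + (if b \<in> J then zb else 0) + (if c \<in> J then zc else 0)"
  using assms by (simp add: subset_sum_point)

text \<open>A chamber having the four connected sets \<open>{v, a, b}, {v, b}, {v, a, c}, {v, c}\<close> among its
  walls.\<close>

definition x0 :: "real^'n" where
  "x0 = point (-4) (-4) 6 6"

lemma generic_x0: "J \<noteq> {} \<Longrightarrow> subset_sum J x0 \<noteq> 0"
proof (cases "J \<subseteq> {v, a, b, c}")
  case True
  moreover assume "J \<noteq> {}"
  ultimately show ?thesis
    unfolding x0_def subset_sum_point_inside[OF True]
    by (cases "v \<in> J"; cases "a \<in> J"; cases "b \<in> J"; cases "c \<in> J") auto
next
  case False
  then show ?thesis
    using subset_sum_point_pos[OF False, of "-4" "-4" 6 6] by (simp add: x0_def)
qed

lemma wall_point_point: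
  assumes F: "\<forall>J\<in>F. J \<noteq> {}" and K: "K \<subseteq> {v, a, b, c}"
    and on: "subset_sum K (point zv za zb zc) = 0"
    and small: "\<bar>zv\<bar> + \<bar>za\<bar> + \<bar>zb\<bar> + \<bar>zc\<bar> < 100"
    and signs: "\<And>bv ba bb bc. bv \<or> ba \<or> bb \<or> bc \<Longrightarrow>
           \<not> (bv = (v \<in> K) \<and> ba = (a \<in> K) \<and> bb = (b \<in> K) \<and> bc = (c \<in> K)) \<Longrightarrow>
           0 < ((if bv then zv else 0) + (if ba then za else 0) + (if bb then zb else 0) + (if bc then zc else 0))
             * ((if bv then -4 else 0) + (if ba then -4 else 0) + (if bb then 6 else 0) + (if bc then 6 else (0::real)))"
  shows "wall_point F x0 K (point zv za zb zc)"
  unfolding wall_point_def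
proof (intro conjI ballI on)
  fix J assume J: "J \<in> F - {K}"
  show "0 < subset_sum J (point zv za zb zc) * subset_sum J x0"
  proof (cases "J \<subseteq> {v, a, b, c}")
    case True
    then have "\<not> ((v \<in> J) = (v \<in> K) \<and> (a \<in> J) = (a \<in> K) \<and> (b \<in> J) = (b \<in> K) \<and> (c \<in> J) = (c \<in> K))"
      using K J by blast
    moreover have "v \<in> J \<or> a \<in> J \<or> b \<in> J \<or> c \<in> J"
      using True F J by blast
    ultimately show ?thesis
      using signs unfolding x0_def subset_sum_point_inside[OF True] by simp
  next
    case False
    then show ?thesis
      using subset_sum_point_pos[OF False small] subset_sum_point_pos[OF False, of "-4" "-4" 6 6]
      by (simp add: x0_def)
  qed
qed

lemma star_connected: "v \<in> K \<Longrightarrow> K \<subseteq> {v, a, b, c} \<Longrightarrow> K \<in> connected_subsets E"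
  unfolding connected_subsets_def using edges sym
  by (intro CollectI induced_connected_star[of v]) auto

lemma not_simplicial: "\<not> simplicial_arrangement (connected_subgraph_arrangement E)"
proof -
  have generic: "\<forall>J\<in>connected_subsets E. subset_sum J x0 \<noteq> 0"
    using generic_x0 connected_subsets_nonempty by blast
  have "\<not> open_simplicial_cone (chamber (connected_subsets E) x0)"
  proof (rule chamber_not_simplicial_if_dependent_walls[OF connected_subsets_nonempty generic])
    show "wall_point (connected_subsets E) x0 {v, a, b} (point (-2) (-2) 4 3)"
      "wall_point (connected_subsets E) x0 {v, b} (point (-4) (-2) 4 5)"
      "wall_point (connected_subsets E) x0 {v, a, c} (point (-3) (-3) 5 6)"
      "wall_point (connected_subsets E) x0 {v, c} (point (-4) (-2) 5 4)"
      by (rule wall_point_point[OF connected_subsets_nonempty];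
          use distinct in \<open>auto simp: subset_sum_point_inside\<close>)+
    show "{v, a, b} \<in> connected_subsets E" "{v, b} \<in> connected_subsets E"
      "{v, a, c} \<in> connected_subsets E" "{v, c} \<in> connected_subsets E"
      by (auto intro!: star_connected)
    show "{v, a, b} \<noteq> {v, b}" "{v, a, b} \<noteq> {v, a, c}"
      using distinct by (auto simp: doubleton_eq_iff insert_eq_iff)
    show "{v, a, b} \<union> {v, c} = {v, b} \<union> {v, a, c}" "{v, a, b} \<inter> {v, c} = {v, b} \<inter> {v, a, c}"
      using distinct by blast+
  qed
  with generic show ?thesis
    unfolding simplicial_connected_subgraph_arrangement_iff by blast
qed

end

locale separating_pair =
  fixes E :: "'n::finite \<Rightarrow> 'n \<Rightarrow> bool" and u w r :: 'n
  assumes uw: "u \<noteq> w" and r: "r \<noteq> u" "r \<noteq> w"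
    and conn_u: "induced_connected E (UNIV - {u})" and conn_w: "induced_connected E (UNIV - {w})"
    and sep: "\<not> induced_connected E (UNIV - {u, w})"
begin

abbreviation "m \<equiv> card (UNIV - {u, w, r})"

text \<open>All coordinates off \<open>{u, w, r}\<close> are 10, and the coordinate at r makes the total sum \<open>\<gamma>\<close>.\<close>

definition point :: "real \<Rightarrow> real \<Rightarrow> real \<Rightarrow> real^'n" where
  "point \<alpha> \<beta> \<gamma> = (\<chi> i. if i = u then \<alpha> else if i = w then \<beta>
      else if i = r then \<gamma> - \<alpha> - \<beta> - 10 * real m else 10)"

lemma subset_sum_point:
  "subset_sum J (point \<alpha> \<beta> \<gamma>) = (if u \<in> J then \<alpha> else 0) + (if w \<in> J then \<beta> else 0)
     + (if r \<in> J then \<gamma> - \<alpha> - \<beta> - 10 * real m else 0) + 10 * real (card (J - {u, w, r}))"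
proof -
  have "subset_sum (J \<inter> {u, w, r}) (point \<alpha> \<beta> \<gamma>) =
      (\<Sum>i\<in>{u, w, r}. if i \<in> J then point \<alpha> \<beta> \<gamma> $ i else 0)"
    unfolding subset_sum_def by (simp add: sum.If_cases Int_commute)
  also have "\<dots> = (if u \<in> J then \<alpha> else 0) + (if w \<in> J then \<beta> else 0)
     + (if r \<in> J then \<gamma> - \<alpha> - \<beta> - 10 * real m else 0)"
    using uw r by (simp add: point_def)
  finally show ?thesis
    by (subst subset_sum_const_outside[of "{u, w, r}" _ 10]) (auto simp: point_def)
qed

lemma subset_sum_point_pos:
  assumes "r \<notin> J" "\<not> J \<subseteq> {u, w, r}" "\<bar>\<alpha>\<bar> + \<bar>\<beta>\<bar> < 10"
  shows "0 < subset_sum J (point \<alpha> \<beta> \<gamma>)"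
proof -
  have "1 \<le> card (J - {u, w, r})"
    using assms(2) by (simp add: Suc_le_eq card_gt_0_iff)
  then have "10 \<le> 10 * real (card (J - {u, w, r}))"
    by simp
  then show ?thesis
    unfolding subset_sum_point using assms by (smt (verit))
qed

lemma subset_sum_point_neg:
  assumes "r \<in> J" "\<not> UNIV - {u, w, r} \<subseteq> J" "\<bar>\<alpha>\<bar> + \<bar>\<beta>\<bar> + \<bar>\<gamma> - \<alpha> - \<beta>\<bar> < 10"
  shows "subset_sum J (point \<alpha> \<beta> \<gamma>) < 0"
proof -
  have "J - {u, w, r} \<subset> UNIV - {u, w, r}"
    using assms by auto
  then have "card (J - {u, w, r}) + 1 \<le> m"
    by (simp add: psubset_card_mono Suc_le_eq)
  then have "10 * real (card (J - {u, w, r})) \<le> 10 * real m - 10"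
    by linarith
  then show ?thesis
    unfolding subset_sum_point using assms by (smt (verit))
qed

lemma subset_sum_point_special:
  "subset_sum {u} (point \<alpha> \<beta> \<gamma>) = \<alpha>" "subset_sum {w} (point \<alpha> \<beta> \<gamma>) = \<beta>"
  "subset_sum {u, w} (point \<alpha> \<beta> \<gamma>) = \<alpha> + \<beta>" "subset_sum (UNIV - {w}) (point \<alpha> \<beta> \<gamma>) = \<gamma> - \<beta>"
  "subset_sum (UNIV - {u}) (point \<alpha> \<beta> \<gamma>) = \<gamma> - \<alpha>" "subset_sum UNIV (point \<alpha> \<beta> \<gamma>) = \<gamma>"
proof -
  have "UNIV - {w} - {u, w, r} = UNIV - {u, w, r}" "UNIV - {u} - {u, w, r} = UNIV - {u, w, r}"
    by auto
  then show "subset_sum {u} (point \<alpha> \<beta> \<gamma>) = \<alpha>" "subset_sum {w} (point \<alpha> \<beta> \<gamma>) = \<beta>"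
    "subset_sum {u, w} (point \<alpha> \<beta> \<gamma>) = \<alpha> + \<beta>" "subset_sum (UNIV - {w}) (point \<alpha> \<beta> \<gamma>) = \<gamma> - \<beta>"
    "subset_sum (UNIV - {u}) (point \<alpha> \<beta> \<gamma>) = \<gamma> - \<alpha>" "subset_sum UNIV (point \<alpha> \<beta> \<gamma>) = \<gamma>"
    using uw r by (simp_all add: subset_sum_point)
qed

lemma connected_subset_cases:
  assumes "J \<in> connected_subsets E"
  shows "(r \<notin> J \<and> \<not> J \<subseteq> {u, w, r}) \<or> (r \<in> J \<and> \<not> UNIV - {u, w, r} \<subseteq> J) \<or>
    J = {u} \<or> J = {w} \<or> J = {u, w} \<or> J = UNIV - {w} \<or> J = UNIV - {u} \<or> J = UNIV"
proof -
  \<comment> \<open>\<open>UNIV - {u, w}\<close> would be the one further case: it is excluded because it is disconnected\<close>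
  have "J \<noteq> {}" "J \<noteq> UNIV - {u, w}"
    using assms sep by (auto simp: connected_subsets_def induced_connected_def)
  then show ?thesis
    by blast
qed

definition x0 :: "real^'n" where
  "x0 = point 2 2 3"

lemma same_side:
  assumes J: "J \<in> connected_subsets E" "J \<noteq> K"
    and small: "\<bar>\<alpha>\<bar> + \<bar>\<beta>\<bar> + \<bar>\<gamma> - \<alpha> - \<beta>\<bar> < 10"
    and s: "K \<noteq> {u} \<Longrightarrow> 0 < \<alpha>" "K \<noteq> {w} \<Longrightarrow> 0 < \<beta>" "0 < \<alpha> + \<beta>"
      "K \<noteq> UNIV - {w} \<Longrightarrow> 0 < \<gamma> - \<beta>" "K \<noteq> UNIV - {u} \<Longrightarrow> 0 < \<gamma> - \<alpha>" "0 < \<gamma>"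
  shows "0 < subset_sum J (point \<alpha> \<beta> \<gamma>) * subset_sum J x0"
proof -
  have small0: "\<bar>2::real\<bar> + \<bar>2::real\<bar> + \<bar>3 - 2 - 2::real\<bar> < 10"
    by simp
  from connected_subset_cases[OF J(1)] show ?thesis
  proof (elim disjE conjE)
    assume "r \<notin> J" "\<not> J \<subseteq> {u, w, r}"
    then show ?thesis
      using subset_sum_point_pos[of J \<alpha> \<beta> \<gamma>] subset_sum_point_pos[of J 2 2 3] small
      unfolding x0_def by simp
  next
    assume "r \<in> J" "\<not> UNIV - {u, w, r} \<subseteq> J"
    then show ?thesis
      using subset_sum_point_neg[OF _ _ small] subset_sum_point_neg[OF _ _ small0]
      unfolding x0_def by (simp add: mult_neg_neg)
  qed (use J(2) s in \<open>auto simp: x0_def subset_sum_point_special\<close>)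
qed

lemma wall_point_point:
  assumes "subset_sum K (point \<alpha> \<beta> \<gamma>) = 0" "\<bar>\<alpha>\<bar> + \<bar>\<beta>\<bar> + \<bar>\<gamma> - \<alpha> - \<beta>\<bar> < 10"
    and "K \<noteq> {u} \<Longrightarrow> 0 < \<alpha>" "K \<noteq> {w} \<Longrightarrow> 0 < \<beta>" "0 < \<alpha> + \<beta>"
      "K \<noteq> UNIV - {w} \<Longrightarrow> 0 < \<gamma> - \<beta>" "K \<noteq> UNIV - {u} \<Longrightarrow> 0 < \<gamma> - \<alpha>" "0 < \<gamma>"
  shows "wall_point (connected_subsets E) x0 K (point \<alpha> \<beta> \<gamma>)"
  unfolding wall_point_def using assms same_side[of _ K \<alpha> \<beta> \<gamma>] by blast

lemma generic_x0: "\<forall>J\<in>connected_subsets E. subset_sum J x0 \<noteq> 0"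
proof
  fix J assume J: "J \<in> connected_subsets E"
  then have "J \<noteq> {}"
    using connected_subsets_nonempty by blast
  with J have "0 < subset_sum J x0 * subset_sum J x0"
    using same_side[of J "{}" 2 2 3] by (simp add: x0_def)
  then show "subset_sum J x0 \<noteq> 0"
    by auto
qed

lemma not_simplicial: "\<not> simplicial_arrangement (connected_subgraph_arrangement E)"
proof -
  have "\<not> open_simplicial_cone (chamber (connected_subsets E) x0)"
  proof (rule chamber_not_simplicial_if_dependent_walls[OF connected_subsets_nonempty generic_x0])
    show "wall_point (connected_subsets E) x0 {u} (point 0 2 3)"
      "wall_point (connected_subsets E) x0 {w} (point 2 0 3)"
      "wall_point (connected_subsets E) x0 (UNIV - {w}) (point 1 2 2)"
      "wall_point (connected_subsets E) x0 (UNIV - {u}) (point 2 1 2)"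
      by (rule wall_point_point; simp add: subset_sum_point_special)+
    show "{u} \<in> connected_subsets E" "{w} \<in> connected_subsets E"
      "UNIV - {w} \<in> connected_subsets E" "UNIV - {u} \<in> connected_subsets E"
      using conn_u conn_w by (auto simp: connected_subsets_def induced_connected_def)
    show "{u} \<noteq> {w}" "{u} \<noteq> UNIV - {w}" "{u} \<union> (UNIV - {u}) = {w} \<union> (UNIV - {w})"
      "{u} \<inter> (UNIV - {u}) = {w} \<inter> (UNIV - {w})"
      using uw r by auto
  qed
  with generic_x0 show ?thesis
    unfolding simplicial_connected_subgraph_arrangement_iff by blast
qed

end

section \<open>Graphs of maximum degree two\<close>

lemma longest_walk_exists:
  fixes E :: "'n::finite \<Rightarrow> 'n \<Rightarrow> bool"
  shows "\<exists>xs. distinct xs \<and> successively E xs \<and> xs \<noteq> [] \<and>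
    (\<forall>ys. distinct ys \<and> successively E ys \<longrightarrow> length ys \<le> length xs)"
proof -
  define W where "W = {xs :: 'n list. distinct xs \<and> successively E xs \<and> xs \<noteq> []}"
  have "finite W"
    by (rule finite_subset[OF _ finite_subset_distinct[of UNIV]]) (auto simp: W_def)
  moreover have "[undefined] \<in> W"
    by (simp add: W_def)
  ultimately obtain xs where "xs \<in> W" "length xs = Max (length ` W)"
    by (metis Max_in empty_iff finite_imageI image_iff)
  moreover have "length ys \<le> Max (length ` W)" if "ys \<in> W" for ys
    using \<open>finite W\<close> that by simp
  ultimately have "length ys \<le> length xs" if "distinct ys" "successively E ys" for ys
    using that by (cases "ys = []") (auto simp: W_def)
  with \<open>xs \<in> W\<close> show ?thesis
    by (auto simp: W_def)
qed

locale longest_walk =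
  fixes E :: "'n::finite \<Rightarrow> 'n \<Rightarrow> bool" and xs :: "'n list"
  assumes sym: "\<And>x y. E x y \<Longrightarrow> E y x" and irrefl: "\<And>x. \<not> E x x"
    and degree: "\<And>v x y z. E v x \<Longrightarrow> E v y \<Longrightarrow> E v z \<Longrightarrow> x = y \<or> x = z \<or> y = z"
    and walk: "distinct xs" "successively E xs" "xs \<noteq> []"
    and longest: "\<And>ys. distinct ys \<Longrightarrow> successively E ys \<Longrightarrow> length ys \<le> length xs"
begin

abbreviation "k \<equiv> length xs - 1"

lemma edge_nth: "Suc i < length xs \<Longrightarrow> E (xs ! i) (xs ! Suc i)"
  using successively_nth[OF walk(2)] .

lemma nth_eq_iff: "i < length xs \<Longrightarrow> j < length xs \<Longrightarrow> xs ! i = xs ! j \<longleftrightarrow> i = j"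
  using nth_eq_iff_index_eq[OF walk(1)] .

lemma nth_neq: "i < length xs \<Longrightarrow> j < length xs \<Longrightarrow> i \<noteq> j \<Longrightarrow> xs ! i \<noteq> xs ! j"
  using nth_eq_iff by blast

lemma set_connected:
  assumes "successively E ys" "ys \<noteq> []"
  shows "induced_connected E (set ys)"
  using sym assms by (rule induced_connected_walk)

lemma inner_neighbours:
  assumes "0 < i" "i < k" "E (xs ! i) y"
  shows "y = xs ! (i - 1) \<or> y = xs ! Suc i"
proof -
  have "E (xs ! i) (xs ! (i - 1))" "E (xs ! i) (xs ! Suc i)"
    using sym[OF edge_nth[of "i - 1"]] edge_nth[of i] assms by simp_all
  moreover have "xs ! (i - 1) \<noteq> xs ! Suc i"
    using nth_eq_iff[of "i - 1" "Suc i"] assms by simp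
  ultimately show ?thesis
    using degree assms(3) by metis
qed

lemma neighbour_in_walk:
  assumes "x \<in> set xs" "E x y"
  shows "y \<in> set xs"
proof (rule ccontr)
  assume y: "y \<notin> set xs"
  obtain i where i: "i < length xs" "x = xs ! i"
    using assms(1) by (auto simp: in_set_conv_nth)
  \<comment> \<open>an endpoint with a new neighbour would extend the walk; inner vertices have no room left\<close>
  consider "i = 0" | "i = k" | "0 < i" "i < k"
    using i by linarith
  then show False
  proof cases
    case 1
    then have "y # xs \<in> {ys. distinct ys \<and> successively E ys}"
      using y walk sym[OF assms(2)] i by (auto simp: successively_Cons hd_conv_nth)
    then show False
      using longest[of "y # xs"] by simp
  next
    case 2
    then have "xs @ [y] \<in> {ys. distinct ys \<and> successively E ys}"
      using y walk assms(2) i by (auto simp: successively_append_iff last_conv_nth)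
    then show False
      using longest[of "xs @ [y]"] by simp
  next
    case 3
    then show False
      using inner_neighbours[of i y] assms(2) i y by auto
  qed
qed

lemma set_walk_eq_UNIV:
  assumes "graph_connected E"
  shows "set xs = UNIV"
proof -
  have "v \<in> set xs" for v
  proof -
    have "(\<lambda>a b. a \<in> UNIV \<and> b \<in> UNIV \<and> E a b)\<^sup>*\<^sup>* (hd xs) v"
      using assms by (auto simp: graph_connected_def induced_connected_def)
    then show ?thesis
      by (induction rule: rtranclp_induct) (use walk(3) neighbour_in_walk in auto)
  qed
  then show ?thesis
    by auto
qed

lemma edge_positions:
  assumes "i < length xs" "j < length xs" "E (xs ! i) (xs ! j)"
  shows "j = Suc i \<or> i = Suc j \<or> (i = 0 \<and> j = k) \<or> (i = k \<and> j = 0)"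
proof -
  have inner: "j = Suc i \<or> i = Suc j" if "0 < i" "i < k" "j < length xs" "E (xs ! i) (xs ! j)" for i j
    using inner_neighbours[OF that(1,2,4)] nth_eq_iff[of j "i - 1"] nth_eq_iff[of j "Suc i"] that
    by auto
  have "i \<noteq> j"
    using assms irrefl by auto
  then show ?thesis
    using inner[of i j] inner[of j i] sym[OF assms(3)] assms by linarith
qed

lemma card_eq_length:
  assumes "graph_connected E"
  shows "CARD('n) = length xs"
  using distinct_card[OF walk(1)] set_walk_eq_UNIV[OF assms] by simp

lemma edge_iff_consecutive:
  assumes open_walk: "\<not> (2 \<le> k \<and> E (xs ! 0) (xs ! k))" and "i < length xs" "j < length xs"
  shows "E (xs ! i) (xs ! j) \<longleftrightarrow> i = Suc j \<or> j = Suc i"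
proof
  assume e: "E (xs ! i) (xs ! j)"
  have "i \<noteq> j"
    using e irrefl by auto
  from edge_positions[OF assms(2,3) e] show "i = Suc j \<or> j = Suc i"
  proof (elim disjE conjE)
    assume "i = 0" "j = k"
    then show ?thesis
      using open_walk e \<open>i \<noteq> j\<close> by auto
  next
    assume "i = k" "j = 0"
    then show ?thesis
      using open_walk sym[OF e] \<open>i \<noteq> j\<close> by auto
  qed auto
next
  assume "i = Suc j \<or> j = Suc i"
  then show "E (xs ! i) (xs ! j)"
    using edge_nth[of j] edge_nth[of i] sym[of "xs ! j" "xs ! i"] assms(2,3) by auto
qed

lemma is_path_graph_if_not_closed:
  assumes conn: "graph_connected E" and open_walk: "\<not> (2 \<le> k \<and> E (xs ! 0) (xs ! k))"
  shows "is_path_graph E"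
proof -
  define p where "p = the_inv_into {..<length xs} ((!) xs)"
  have bij: "bij_betw ((!) xs) {..<length xs} UNIV"
    using bij_betw_nth[OF walk(1) _ set_walk_eq_UNIV[OF conn, symmetric]] by simp
  then have p: "bij_betw p UNIV {0..<CARD('n)}"
    unfolding p_def card_eq_length[OF conn] using bij_betw_the_inv_into by (fastforce simp: atLeast0LessThan)
  have xs_p: "xs ! p v = v" "p v < length xs" for v
    using bij p unfolding p_def card_eq_length[OF conn]
    by (auto simp: bij_betw_def f_the_inv_into_f atLeast0LessThan)
  show ?thesis
    unfolding is_path_graph_def
  proof (intro exI[of _ p] conjI allI p)
    fix u v
    have "E u v \<longleftrightarrow> E (xs ! p u) (xs ! p v)"
      using xs_p by simp
    also have "\<dots> \<longleftrightarrow> p u = Suc (p v) \<or> p v = Suc (p u)"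
      using edge_iff_consecutive[OF open_walk] xs_p by blast
    finally show "E u v \<longleftrightarrow> p u = p v + 1 \<or> p v = p u + 1"
      by simp
  qed
qed

lemma is_triangle_if_closed:
  assumes conn: "graph_connected E" and "k = 2" and closing: "E (xs ! 0) (xs ! k)"
  shows "is_triangle E"
  unfolding is_triangle_def
proof (intro conjI allI iffI)
  show "CARD('n) = 3"
    using card_eq_length[OF conn] \<open>k = 2\<close> walk(3) by simp
  fix u v :: 'n assume "u \<noteq> v"
  have "length xs = 3"
    using \<open>k = 2\<close> walk(3) by (cases xs) auto
  then obtain i j where ij: "i < 3" "u = xs ! i" "j < 3" "v = xs ! j"
    using set_walk_eq_UNIV[OF conn] by (metis UNIV_I in_set_conv_nth)
  then have "i \<noteq> j"
    using \<open>u \<noteq> v\<close> by auto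
  then have "j = Suc i \<or> i = Suc j \<or> (i = 0 \<and> j = 2) \<or> (i = 2 \<and> j = 0)"
    using ij by arith
  then show "E u v"
    using edge_nth[of i] sym[OF edge_nth[of j]] closing sym[OF closing] ij \<open>k = 2\<close> by auto
qed (use irrefl in auto)

lemma delete_first_connected:
  assumes conn: "graph_connected E" and "1 \<le> k"
  shows "induced_connected E (UNIV - {xs ! 0})"
proof -
  obtain y ys where xs: "xs = y # ys"
    using walk(3) by (cases xs) auto
  have "successively E ys" "ys \<noteq> []"
    using walk(2) assms(2) xs by (auto simp: successively_Cons)
  then have "induced_connected E (set ys)"
    by (rule set_connected)
  moreover have "set ys = UNIV - {xs ! 0}"
    using walk(1) set_walk_eq_UNIV[OF conn] xs by auto
  ultimately show ?thesis
    by simp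
qed

lemma delete_third_connected:
  assumes conn: "graph_connected E" and "3 \<le> k" and closing: "E (xs ! 0) (xs ! k)"
  shows "induced_connected E (UNIV - {xs ! 2})"
proof -
  \<comment> \<open>go round the cycle the other way: \<open>xs ! 3, \<dots>, xs ! k, xs ! 0, xs ! 1\<close>\<close>
  define ys where "ys = drop 3 xs @ take 2 xs"
  have split: "xs = take 2 xs @ xs ! 2 # drop 3 xs"
    using assms(2) id_take_nth_drop[of 2 xs] by simp
  have "successively E ys"
  proof -
    have "successively E (take 2 xs)" "successively E (drop 3 xs)"
      using walk(2) successively_append_iff[of E "take 2 xs" "drop 2 xs"]
        successively_append_iff[of E "take 3 xs" "drop 3 xs"] by simp_all
    moreover have "last (drop 3 xs) = xs ! k"
      using assms(2) walk(3) by (simp add: last_drop last_conv_nth)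
    moreover have "hd (take 2 xs) = xs ! 0"
      using walk(3) by (cases xs) simp_all
    ultimately show ?thesis
      unfolding ys_def successively_append_iff using sym[OF closing] by simp
  qed
  moreover have "ys \<noteq> []"
    using walk(3) by (simp add: ys_def)
  ultimately have "induced_connected E (set ys)"
    by (rule set_connected)
  moreover have "set ys = UNIV - {xs ! 2}"
  proof -
    have "distinct (take 2 xs @ xs ! 2 # drop 3 xs)" "set (take 2 xs @ xs ! 2 # drop 3 xs) = UNIV"
      using walk(1) set_walk_eq_UNIV[OF conn] split by simp_all
    then show ?thesis
      unfolding ys_def by auto
  qed
  ultimately show ?thesis
    by simp
qed

lemma delete_first_and_third_disconnected:
  assumes "3 \<le> k"
  shows "\<not> induced_connected E (UNIV - {xs ! 0, xs ! 2})"
proof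
  let ?S = "UNIV - {xs ! 0, xs ! 2}"
  assume conn: "induced_connected E ?S"
  have len: "1 < length xs" "2 < length xs" "3 < length xs"
    using assms by linarith+
  have "xs ! 1 \<in> ?S" "xs ! 3 \<in> ?S"
    using nth_neq[of 1 0] nth_neq[of 1 2] nth_neq[of 3 0] nth_neq[of 3 2] len walk(3) by auto
  with conn have "(\<lambda>a b. a \<in> ?S \<and> b \<in> ?S \<and> E a b)\<^sup>*\<^sup>* (xs ! 1) (xs ! 3)"
    unfolding induced_connected_def by blast
  \<comment> \<open>both neighbours of \<open>xs ! 1\<close> have been deleted\<close>
  then have "xs ! 3 = xs ! 1"
  proof (induction rule: rtranclp_induct)
    case (step y z)
    then show ?case
      using inner_neighbours[of 1 z] assms by (auto simp: numeral_2_eq_2)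
  qed simp
  then show False
    using nth_neq[of 3 1] len by simp
qed

end

lemma degree_two_graph_cases:
  fixes E :: "'n::finite \<Rightarrow> 'n \<Rightarrow> bool"
  assumes "simple_graph E" and conn: "graph_connected E"
    and "\<And>v x y z. E v x \<Longrightarrow> E v y \<Longrightarrow> E v z \<Longrightarrow> x = y \<or> x = z \<or> y = z"
  obtains "is_triangle E" | "is_path_graph E" | u w r where "separating_pair E u w r"
proof -
  obtain xs where "distinct xs" "successively E xs" "xs \<noteq> []"
    "\<And>ys. distinct ys \<Longrightarrow> successively E ys \<Longrightarrow> length ys \<le> length xs"
    using longest_walk_exists[of E] by blast
  then interpret longest_walk E xs
    using assms by unfold_locales (auto simp: simple_graph_def)
  consider "\<not> (2 \<le> k \<and> E (xs ! 0) (xs ! k))" | "k = 2" "E (xs ! 0) (xs ! k)"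
    | "3 \<le> k" "E (xs ! 0) (xs ! k)"
    by linarith
  then show thesis
  proof cases
    case 1
    then show ?thesis
      using is_path_graph_if_not_closed[OF conn] that by blast
  next
    case 2
    then show ?thesis
      using is_triangle_if_closed[OF conn] that by blast
  next
    case 3
    then have "separating_pair E (xs ! 0) (xs ! 2) (xs ! 1)"
      using walk(3) delete_first_connected[OF conn] delete_third_connected[OF conn]
        delete_first_and_third_disconnected nth_neq[of 0 2] nth_neq[of 1 0] nth_neq[of 1 2]
      by unfold_locales auto
    then show ?thesis
      using that by blast
  qed
qed

section \<open>The triangle\<close>

lemma linear_orthant_of_three_forms:
  fixes g1 g2 g3 :: "real^'n::finite \<Rightarrow> real" and u v w :: 'n
  assumes UNIV: "UNIV = {u, v, w}" and dist: "u \<noteq> v" "u \<noteq> w" "v \<noteq> w"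
    and C: "\<And>x. x \<in> C \<longleftrightarrow> 0 < g1 x \<and> 0 < g2 x \<and> 0 < g3 x"
    and lin: "linear g1" "linear g2" "linear g3"
    and ker: "\<And>x. g1 x = 0 \<Longrightarrow> g2 x = 0 \<Longrightarrow> g3 x = 0 \<Longrightarrow> x $ u = 0 \<and> x $ v = 0 \<and> x $ w = 0"
  shows "linear_orthant C"
proof -
  define g where "g i = (if i = u then g1 else if i = v then g2 else g3)" for i
  have all: "(\<forall>i. P i) \<longleftrightarrow> P u \<and> P v \<and> P w" for P :: "'n \<Rightarrow> bool"
    by (metis UNIV UNIV_I insertE singletonD)
  have "linear_orthant {x. \<forall>i. 0 < g i x}"
  proof (rule linear_orthant_of_forms)
    show "linear (g i)" for i
      using lin by (simp add: g_def)
    fix x assume "\<And>i. g i x = 0"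
    from this[of u] this[of v] this[of w] have "x $ u = 0 \<and> x $ v = 0 \<and> x $ w = 0"
      using dist by (intro ker) (simp_all add: g_def)
    then show "x = 0"
      by (simp add: vec_eq_iff all)
  qed
  moreover have "C = {x. \<forall>i. 0 < g i x}"
    using dist by (auto simp: C all g_def)
  ultimately show ?thesis
    by simp
qed

lemma subset_sum_three:
  assumes UNIV: "UNIV = {u, v, w}" and dist: "u \<noteq> v" "u \<noteq> w" "v \<noteq> w"
  shows "subset_sum J x = (if u \<in> J then x $ u else 0) + (if v \<in> J then x $ v else 0)
    + (if w \<in> J then x $ w else 0)"
proof -
  have "subset_sum J x = (\<Sum>i\<in>UNIV. if i \<in> J then x $ i else 0)"
    unfolding subset_sum_def by (simp add: sum.If_cases)
  then show ?thesis
    unfolding UNIV using dist by simp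
qed

lemma chamber_three_iff:
  fixes x0 :: "real^'n::finite"
  assumes UNIV: "UNIV = {u, v, w}" and dist: "u \<noteq> v" "u \<noteq> w" "v \<noteq> w"
  shows "x \<in> chamber {J. J \<noteq> {}} x0 \<longleftrightarrow>
    0 < x $ u * x0 $ u \<and> 0 < x $ v * x0 $ v \<and> 0 < x $ w * x0 $ w \<and>
    0 < (x $ u + x $ v) * (x0 $ u + x0 $ v) \<and> 0 < (x $ u + x $ w) * (x0 $ u + x0 $ w) \<and>
    0 < (x $ v + x $ w) * (x0 $ v + x0 $ w) \<and> 0 < (x $ u + x $ v + x $ w) * (x0 $ u + x0 $ v + x0 $ w)"
    (is "_ \<longleftrightarrow> ?signs")
proof
  assume "x \<in> chamber {J. J \<noteq> {}} x0"
  then have "0 < subset_sum J x * subset_sum J x0" if "J \<noteq> {}" for J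
    using that by (simp add: chamber_def)
  from this[of "{u}"] this[of "{v}"] this[of "{w}"] this[of "{u, v}"] this[of "{u, w}"]
    this[of "{v, w}"] this[of UNIV]
  show ?signs
    using dist by (simp add: subset_sum_three[OF UNIV dist] UNIV)
next
  assume ?signs
  moreover have "J \<noteq> {} \<Longrightarrow> u \<in> J \<or> v \<in> J \<or> w \<in> J" for J
    using UNIV by auto
  ultimately show "x \<in> chamber {J. J \<noteq> {}} x0"
    unfolding chamber_def subset_sum_three[OF UNIV dist] by (auto simp: algebra_simps)
qed

lemma linear_orthant_chamber_three_sorted:
  fixes x0 :: "real^'n::finite"
  assumes UNIV: "UNIV = {u, v, w}" and dist: "u \<noteq> v" "u \<noteq> w" "v \<noteq> w"
    and generic: "\<And>J. J \<noteq> {} \<Longrightarrow> subset_sum J x0 \<noteq> 0"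
    and sorted: "x0 $ w \<le> x0 $ v" "x0 $ v \<le> x0 $ u" and total: "0 < subset_sum UNIV x0"
  shows "linear_orthant (chamber {J. J \<noteq> {}} x0)"
proof -
  define a b c where "a = x0 $ u" and "b = x0 $ v" and "c = x0 $ w"
  note sum3 = subset_sum_three[OF UNIV dist]
  note mem = chamber_three_iff[OF UNIV dist, of _ x0, folded a_def b_def c_def]
  note three = linear_orthant_of_three_forms[OF UNIV dist]
  have nz: "a \<noteq> 0" "b \<noteq> 0" "c \<noteq> 0" "a + b \<noteq> 0" "a + c \<noteq> 0" "b + c \<noteq> 0"
    using generic[of "{u}"] generic[of "{v}"] generic[of "{w}"] generic[of "{u, v}"]
      generic[of "{u, w}"] generic[of "{v, w}"] dist
    by (simp_all add: sum3 a_def b_def c_def)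
  have ord: "c \<le> b" "b \<le> a" and s: "0 < a + b + c"
    using sorted total dist by (simp_all add: sum3 a_def b_def c_def)
  have sign: "0 < t * s \<longleftrightarrow> (if 0 < s then 0 < t else t < 0)" if "s \<noteq> 0" for s t :: real
    using that by (auto simp: zero_less_mult_iff)
  \<comment> \<open>as \<open>c \<le> b \<le> a\<close> and \<open>0 < a + b + c\<close>, the signs of \<open>c, b + c, b, a + c\<close> fix the chamber\<close>
  consider "0 < c" | "c < 0" "0 < b + c" | "b + c < 0" "0 < b" "0 < a + c"
    | "b + c < 0" "0 < b" "a + c < 0" | "b < 0"
    using nz by linarith
  then show ?thesis
  proof cases
    case 1
    then have "0 < a" "0 < b" "0 < a + b" "0 < a + c" "0 < b + c"
      using ord by linarith+
    with 1 s nz have "x \<in> chamber {J. J \<noteq> {}} x0 \<longleftrightarrow>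
        0 < x $ u \<and> 0 < x $ v \<and> 0 < x $ w" for x
      by (simp add: mem sign) linarith
    then show ?thesis
      by (rule three) (auto intro!: linearI simp: algebra_simps)
  next
    case 2
    then have "0 < a" "0 < b" "0 < a + b" "0 < a + c"
      using ord by linarith+
    with 2 s nz have "x \<in> chamber {J. J \<noteq> {}} x0 \<longleftrightarrow>
        0 < - x $ w \<and> 0 < x $ v + x $ w \<and> 0 < x $ u + x $ w" for x
      by (simp add: mem sign) linarith
    then show ?thesis
      by (rule three) (auto intro!: linearI simp: algebra_simps)
  next
    case 3
    then have "0 < a" "c < 0" "0 < a + b"
      using ord by linarith+
    with 3 s nz have "x \<in> chamber {J. J \<noteq> {}} x0 \<longleftrightarrow>
        0 < x $ v \<and> 0 < - x $ v - x $ w \<and> 0 < x $ u + x $ w" for x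
      by (simp add: mem sign) linarith
    then show ?thesis
      by (rule three) (auto intro!: linearI simp: algebra_simps)
  next
    case 4
    then have "0 < a" "c < 0" "0 < a + b"
      using ord by linarith+
    with 4 s nz have "x \<in> chamber {J. J \<noteq> {}} x0 \<longleftrightarrow>
        0 < - x $ u - x $ w \<and> 0 < - x $ v - x $ w \<and> 0 < x $ u + x $ v + x $ w" for x
      by (simp add: mem sign) linarith
    then show ?thesis
      by (rule three) (auto intro!: linearI simp: algebra_simps)
  next
    case 5
    then have "0 < a" "c < 0" "0 < a + b" "0 < a + c" "b + c < 0"
      using ord s by linarith+
    with 5 s nz have "x \<in> chamber {J. J \<noteq> {}} x0 \<longleftrightarrow>
        0 < - x $ v \<and> 0 < - x $ w \<and> 0 < x $ u + x $ v + x $ w" for x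
      by (simp add: mem sign) linarith
    then show ?thesis
      by (rule three) (auto intro!: linearI simp: algebra_simps)
  qed
qed

lemma sorted_labelling_of_three:
  fixes f :: "'n::finite \<Rightarrow> real"
  assumes "CARD('n) = 3"
  obtains u v w where "UNIV = {u, v, w}" "u \<noteq> v" "u \<noteq> w" "v \<noteq> w" "f w \<le> f v" "f v \<le> f u"
proof -
  obtain a b c :: 'n where abc: "UNIV = {a, b, c}" "a \<noteq> b" "b \<noteq> c" "a \<noteq> c"
    using assms unfolding card_3_iff by blast
  consider "f c \<le> f b" "f b \<le> f a" | "f b \<le> f c" "f c \<le> f a" | "f c \<le> f a" "f a \<le> f b"
    | "f a \<le> f c" "f c \<le> f b" | "f b \<le> f a" "f a \<le> f c" | "f a \<le> f b" "f b \<le> f c"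
    by linarith
  then show thesis
  proof cases
    case 1 with abc show ?thesis by (intro that[of a b c]) auto
  next
    case 2 with abc show ?thesis by (intro that[of a c b]) auto
  next
    case 3 with abc show ?thesis by (intro that[of b a c]) auto
  next
    case 4 with abc show ?thesis by (intro that[of b c a]) auto
  next
    case 5 with abc show ?thesis by (intro that[of c a b]) auto
  next
    case 6 with abc show ?thesis by (intro that[of c b a]) auto
  qed
qed

lemma linear_orthant_chamber_three:
  fixes x0 :: "real^'n::finite"
  assumes "CARD('n) = 3" and generic: "\<And>J. J \<noteq> {} \<Longrightarrow> subset_sum J x0 \<noteq> 0"
  shows "linear_orthant (chamber {J. J \<noteq> {}} x0)"
proof -
  have positive: "linear_orthant (chamber {J. J \<noteq> {}} y)"
    if "\<And>J. J \<noteq> {} \<Longrightarrow> subset_sum J y \<noteq> 0" "0 < subset_sum UNIV y" for y :: "real^'n"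
  proof -
    obtain u v w where "UNIV = {u, v, w}" "u \<noteq> v" "u \<noteq> w" "v \<noteq> w" "y $ w \<le> y $ v" "y $ v \<le> y $ u"
      using sorted_labelling_of_three[OF assms(1), of "\<lambda>i. y $ i"] by blast
    then show ?thesis
      using linear_orthant_chamber_three_sorted that by blast
  qed
  have "subset_sum UNIV x0 \<noteq> 0"
    using generic by simp
  then consider "0 < subset_sum UNIV x0" | "subset_sum UNIV x0 < 0"
    by linarith
  then show ?thesis
  proof cases
    case 1
    then show ?thesis
      using positive generic by blast
  next
    case 2
    \<comment> \<open>the arrangement is central, so \<open>x \<mapsto> - x\<close> maps chambers to chambers\<close>
    have "chamber {J. J \<noteq> {}} x0 = {x. - x \<in> chamber {J. J \<noteq> {}} (- x0)}"
      by (simp add: chamber_def subset_sum_uminus)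
    moreover have "linear_orthant (chamber {J. J \<noteq> {}} (- x0))"
      using positive 2 generic by (simp add: subset_sum_uminus)
    ultimately show ?thesis
      using linear_orthant_uminus by metis
  qed
qed

lemma simplicial_if_triangle:
  assumes "is_triangle E"
  shows "simplicial_arrangement (connected_subgraph_arrangement E)"
proof -
  have card: "CARD('a) = 3" and edge: "\<And>u v. E u v \<longleftrightarrow> u \<noteq> v"
    using assms by (auto simp: is_triangle_def)
  have "connected_subsets E = {J. J \<noteq> {}}"
  proof (intro set_eqI iffI)
    fix J :: "'a set" assume "J \<in> {J. J \<noteq> {}}"
    then obtain z where "z \<in> J"
      by auto
    then show "J \<in> connected_subsets E"
      unfolding connected_subsets_def by (intro CollectI induced_connected_star[of z]) (auto simp: edge)
  qed (use connected_subsets_nonempty in blast)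
  then show ?thesis
    unfolding simplicial_connected_subgraph_arrangement_iff
    by (auto intro!: open_simplicial_cone_if_linear_orthant linear_orthant_chamber_three[OF card])
qed

section \<open>Paths\<close>

lemma sorting_bijection:
  fixes f :: "nat \<Rightarrow> real"
  assumes inj: "inj_on f {..n}"
  obtains \<sigma> where "bij_betw \<sigma> {..n} {..n}" "\<And>s t. s < t \<Longrightarrow> t \<le> n \<Longrightarrow> f (\<sigma> s) < f (\<sigma> t)"
proof -
  define L where "L = sorted_list_of_set (f ` {..n})"
  have len: "length L = Suc n"
    unfolding L_def using card_image[OF inj] by simp
  have set_L: "set L = f ` {..n}"
    unfolding L_def by simp
  have sorted_L: "L ! s < L ! t" if "s < t" "t \<le> n" for s t
    using sorted_wrt_nth_less[of "(<)" L s t] that len unfolding L_def by (simp add: strict_sorted_iff)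
  define \<sigma> where "\<sigma> t = the_inv_into {..n} f (L ! t)" for t
  have \<sigma>: "\<sigma> t \<in> {..n}" "f (\<sigma> t) = L ! t" if "t \<le> n" for t
  proof -
    have "L ! t \<in> f ` {..n}"
      using that len set_L by (metis less_Suc_eq_le nth_mem)
    then show "\<sigma> t \<in> {..n}" "f (\<sigma> t) = L ! t"
      unfolding \<sigma>_def using inj by (auto simp: the_inv_into_f_f)
  qed
  have "inj_on \<sigma> {..n}"
  proof (rule inj_onI)
    fix s t assume st: "s \<in> {..n}" "t \<in> {..n}" "\<sigma> s = \<sigma> t"
    then have "L ! s = L ! t"
      using \<sigma>(2) by (metis atMost_iff)
    then show "s = t"
      using sorted_L[of s t] sorted_L[of t s] st(1,2) by (cases s t rule: linorder_cases) auto
  qed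
  moreover have "\<sigma> ` {..n} = {..n}"
    using \<sigma>(1) by (intro endo_inj_surj \<open>inj_on \<sigma> {..n}\<close>) auto
  ultimately have "bij_betw \<sigma> {..n} {..n}"
    by (simp add: bij_betw_def)
  then show thesis
    using that sorted_L \<sigma>(2) by auto
qed

lemma sorted_steps_if_same_order:
  fixes f g :: "nat \<Rightarrow> real"
  assumes range: "\<And>t. t \<le> n \<Longrightarrow> \<sigma> t \<le> n"
    and sorted: "\<And>s t. s < t \<Longrightarrow> t \<le> n \<Longrightarrow> f (\<sigma> s) < f (\<sigma> t)"
    and same: "\<And>a b. a < b \<Longrightarrow> b \<le> n \<Longrightarrow> 0 < (g b - g a) * (f b - f a)"
    and "t < n"
  shows "g (\<sigma> t) < g (\<sigma> (Suc t))"
proof -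
  have le: "\<sigma> t \<le> n" "\<sigma> (Suc t) \<le> n" and lt: "f (\<sigma> t) < f (\<sigma> (Suc t))"
    using range sorted[of t "Suc t"] \<open>t < n\<close> by auto
  then have "\<sigma> t \<noteq> \<sigma> (Suc t)"
    by auto
  then consider "\<sigma> t < \<sigma> (Suc t)" | "\<sigma> (Suc t) < \<sigma> t"
    by linarith
  then show ?thesis
  proof cases
    case 1
    then have "0 < (g (\<sigma> (Suc t)) - g (\<sigma> t)) * (f (\<sigma> (Suc t)) - f (\<sigma> t))"
      using same le by blast
    with lt show ?thesis
      by (simp add: zero_less_mult_iff)
  next
    case 2
    then have "0 < (g (\<sigma> t) - g (\<sigma> (Suc t))) * (f (\<sigma> t) - f (\<sigma> (Suc t)))"
      using same le by blast
    with lt show ?thesis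
      by (simp add: zero_less_mult_iff)
  qed
qed

lemma same_order_if_sorted_steps:
  fixes f g :: "nat \<Rightarrow> real"
  assumes bij: "bij_betw \<sigma> {..n} {..n}" and sorted: "\<And>s t. s < t \<Longrightarrow> t \<le> n \<Longrightarrow> f (\<sigma> s) < f (\<sigma> t)"
    and steps: "\<And>t. t < n \<Longrightarrow> g (\<sigma> t) < g (\<sigma> (Suc t))"
    and "a < b" "b \<le> n"
  shows "0 < (g b - g a) * (f b - f a)"
proof -
  have mono: "g (\<sigma> s) < g (\<sigma> t)" if "s < t" "t \<le> n" for s t
    using that
  proof (induction t)
    case (Suc t)
    moreover have "g (\<sigma> t) < g (\<sigma> (Suc t))"
      using steps Suc.prems by simp
    ultimately show ?case
      by (cases "s = t") auto
  qed simp
  have "a \<in> \<sigma> ` {..n}" "b \<in> \<sigma> ` {..n}"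
    using bij assms(4,5) by (auto simp: bij_betw_def)
  then obtain s t where st: "s \<le> n" "a = \<sigma> s" "t \<le> n" "b = \<sigma> t"
    by auto
  with \<open>a < b\<close> consider "s < t" | "t < s"
    by (cases s t rule: linorder_cases) auto
  then show ?thesis
  proof cases
    case 1
    then show ?thesis
      using mono[of s t] sorted[of s t] st by (simp add: mult_pos_pos)
  next
    case 2
    then show ?thesis
      using mono[of t s] sorted[of t s] st by (simp add: mult_neg_neg)
  qed
qed

lemma same_order_iff_sorted_steps:
  fixes f g :: "nat \<Rightarrow> real"
  assumes bij: "bij_betw \<sigma> {..n} {..n}" and sorted: "\<And>s t. s < t \<Longrightarrow> t \<le> n \<Longrightarrow> f (\<sigma> s) < f (\<sigma> t)"
  shows "(\<forall>a b. a < b \<longrightarrow> b \<le> n \<longrightarrow> 0 < (g b - g a) * (f b - f a)) \<longleftrightarrow>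
    (\<forall>t<n. g (\<sigma> t) < g (\<sigma> (Suc t)))"
proof (intro iffI allI impI)
  fix t assume same: "\<forall>a b. a < b \<longrightarrow> b \<le> n \<longrightarrow> 0 < (g b - g a) * (f b - f a)" and "t < n"
  have "\<sigma> t \<le> n" if "t \<le> n" for t
    using bij that by (auto simp: bij_betw_def)
  then show "g (\<sigma> t) < g (\<sigma> (Suc t))"
    using same \<open>t < n\<close> by (intro sorted_steps_if_same_order[where f = f and g = g, OF _ sorted]) auto
next
  fix a b assume "\<forall>t<n. g (\<sigma> t) < g (\<sigma> (Suc t))" "a < b" "b \<le> n"
  then show "0 < (g b - g a) * (f b - f a)"
    by (intro same_order_if_sorted_steps[where f = f and g = g, OF bij sorted]) auto
qed

locale path_order =
  fixes E :: "'n::finite \<Rightarrow> 'n \<Rightarrow> bool" and p :: "'n \<Rightarrow> nat"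
  assumes bij: "bij_betw p UNIV {0..<CARD('n)}"
    and edge: "\<And>u v. E u v \<longleftrightarrow> p u = p v + 1 \<or> p v = p u + 1"
begin

definition interval :: "nat \<Rightarrow> nat \<Rightarrow> 'n set" where
  "interval a b = {i. a \<le> p i \<and> p i < b}"

definition prefix_sum :: "nat \<Rightarrow> real^'n \<Rightarrow> real" where
  "prefix_sum k = subset_sum (interval 0 k)"

definition vertex :: "nat \<Rightarrow> 'n" where
  "vertex = the_inv_into UNIV p"

lemma p_less: "p u < CARD('n)"
  using bij by (auto simp: bij_betw_def)

lemma p_vertex: "k < CARD('n) \<Longrightarrow> p (vertex k) = k"
  unfolding vertex_def using bij by (auto simp: bij_betw_def intro!: f_the_inv_into_f)

lemma vertex_p: "vertex (p u) = u"
  unfolding vertex_def using bij by (auto simp: bij_betw_def the_inv_into_f_f)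

lemma interval_connected:
  assumes "a < b" "b \<le> CARD('n)"
  shows "interval a b \<in> connected_subsets E"
proof -
  define ys where "ys = map vertex [a..<b]"
  have "set ys = interval a b"
  proof (intro set_eqI iffI)
    fix x assume "x \<in> set ys"
    then show "x \<in> interval a b"
      using p_vertex assms by (auto simp: ys_def interval_def)
  next
    fix x assume "x \<in> interval a b"
    then show "x \<in> set ys"
      unfolding ys_def interval_def by (metis (mono_tags) atLeastLessThan_iff image_eqI mem_Collect_eq
        set_map set_upt vertex_p)
  qed
  moreover have "successively E ys"
    unfolding successively_conv_nth
  proof (intro allI impI)
    fix j assume "Suc j < length ys"
    then have "a + Suc j < b"
      by (simp add: ys_def)
    then show "E (ys ! j) (ys ! Suc j)"
      using p_vertex[of "a + j"] p_vertex[of "a + Suc j"] assms by (simp add: ys_def edge)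
  qed
  moreover have "ys \<noteq> []"
    using assms by (simp add: ys_def)
  moreover have sym: "\<And>x y. E x y \<Longrightarrow> E y x"
    by (auto simp: edge)
  ultimately show ?thesis
    using induced_connected_walk[of E ys] by (simp add: connected_subsets_def)
qed

lemma walk_covers_between:
  assumes "(\<lambda>a b. a \<in> J \<and> b \<in> J \<and> E a b)\<^sup>*\<^sup>* x y" "x \<in> J"
  shows "p x \<le> m \<and> m \<le> p y \<or> p y \<le> m \<and> m \<le> p x \<Longrightarrow> \<exists>z\<in>J. p z = m"
  using assms
proof (induction arbitrary: m rule: rtranclp_induct)
  case (step y z)
  then have "z \<in> J" "p z = p y + 1 \<or> p y = p z + 1"
    by (auto simp: edge)
  with step show ?case
    by (cases "m = p z") auto
qed auto

lemma connected_subset_interval: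
  assumes "J \<in> connected_subsets E"
  obtains a b where "a < b" "b \<le> CARD('n)" "J = interval a b"
proof -
  have "J \<noteq> {}" and conn: "induced_connected E J"
    using assms by (auto simp: connected_subsets_def induced_connected_def)
  define a c where "a = Min (p ` J)" and "c = Max (p ` J)"
  obtain j1 j2 where j: "j1 \<in> J" "p j1 = a" "j2 \<in> J" "p j2 = c"
    using Min_in[of "p ` J"] Max_in[of "p ` J"] \<open>J \<noteq> {}\<close> unfolding a_def c_def by fastforce
  have bounds: "a \<le> p i" "p i \<le> c" if "i \<in> J" for i
    using that by (auto simp: a_def c_def)
  have "(\<lambda>a b. a \<in> J \<and> b \<in> J \<and> E a b)\<^sup>*\<^sup>* j1 j2"
    using conn j unfolding induced_connected_def by blast
  from walk_covers_between[OF this j(1)] j have between: "\<exists>z\<in>J. p z = m" if "a \<le> m" "m \<le> c" for m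
    using that by auto
  have "J = interval a (Suc c)"
  proof (intro set_eqI iffI)
    fix i assume "i \<in> interval a (Suc c)"
    then obtain z where "z \<in> J" "p z = p i"
      using between[of "p i"] by (auto simp: interval_def)
    then show "i \<in> J"
      by (metis vertex_p)
  qed (auto simp: interval_def bounds less_Suc_eq_le)
  moreover have "a < Suc c" "Suc c \<le> CARD('n)"
    using bounds[OF j(1)] j p_less[of j2] by auto
  ultimately show thesis
    using that by blast
qed

lemma subset_sum_interval:
  assumes "a \<le> b"
  shows "subset_sum (interval a b) x = prefix_sum b x - prefix_sum a x"
proof -
  have "interval 0 b = interval 0 a \<union> interval a b" "interval 0 a \<inter> interval a b = {}"
    using assms by (auto simp: interval_def)
  then show ?thesis
    unfolding prefix_sum_def subset_sum_def by (simp add: sum.union_disjoint)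
qed

lemma prefix_sum_step: "k < CARD('n) \<Longrightarrow> prefix_sum (Suc k) x - prefix_sum k x = x $ vertex k"
proof -
  assume "k < CARD('n)"
  then have "interval k (Suc k) = {vertex k}"
    using p_vertex vertex_p by (auto simp: interval_def le_less_Suc_eq)
  then show ?thesis
    using subset_sum_interval[of k "Suc k" x] by (simp add: subset_sum_def)
qed

lemma chamber_eq:
  "chamber (connected_subsets E) x0 = {x. \<forall>a b. a < b \<longrightarrow> b \<le> CARD('n) \<longrightarrow>
     0 < (prefix_sum b x - prefix_sum a x) * (prefix_sum b x0 - prefix_sum a x0)}"
proof -
  have "(\<forall>J\<in>connected_subsets E. P J) \<longleftrightarrow> (\<forall>a b. a < b \<longrightarrow> b \<le> CARD('n) \<longrightarrow> P (interval a b))" for P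
    using interval_connected connected_subset_interval by metis
  then show ?thesis
    unfolding chamber_def by (simp add: subset_sum_interval)
qed

lemma eq_0_if_prefix_sums_eq:
  assumes "\<And>k. k \<le> CARD('n) \<Longrightarrow> prefix_sum k x = prefix_sum 0 x"
  shows "x = 0"
proof (rule vec_eq_iff[THEN iffD2, rule_format])
  fix i
  have "x $ i = prefix_sum (Suc (p i)) x - prefix_sum (p i) x"
    using prefix_sum_step[of "p i" x] p_less[of i] by (simp add: vertex_p)
  also have "\<dots> = 0"
    using assms[of "Suc (p i)"] assms[of "p i"] p_less[of i] by simp
  finally show "x $ i = 0 $ i"
    by simp
qed

lemma prefix_sums_distinct:
  assumes generic: "\<forall>J\<in>connected_subsets E. subset_sum J x0 \<noteq> 0"
  shows "inj_on (\<lambda>k. prefix_sum k x0) {..CARD('n)}"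
proof -
  have "prefix_sum a x0 \<noteq> prefix_sum b x0" if "a < b" "b \<le> CARD('n)" for a b
  proof -
    have "subset_sum (interval a b) x0 \<noteq> 0"
      using generic interval_connected[OF that] by blast
    then show ?thesis
      using subset_sum_interval[of a b x0] that by simp
  qed
  then show ?thesis
    by (intro inj_onI) (metis atMost_iff linorder_neqE_nat)
qed

lemma linear_orthant_chamber:
  assumes generic: "\<forall>J\<in>connected_subsets E. subset_sum J x0 \<noteq> 0"
  shows "linear_orthant (chamber (connected_subsets E) x0)"
proof -
  define f where "f k = prefix_sum k x0" for k
  obtain \<sigma> where \<sigma>: "bij_betw \<sigma> {..CARD('n)} {..CARD('n)}"
    "\<And>s t. s < t \<Longrightarrow> t \<le> CARD('n) \<Longrightarrow> f (\<sigma> s) < f (\<sigma> t)"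
    using sorting_bijection[OF prefix_sums_distinct[OF generic]] unfolding f_def by blast
  \<comment> \<open>the walls of the chamber are the consecutive differences of the sorted prefix sums\<close>
  define g where "g i x = prefix_sum (\<sigma> (Suc (p i))) x - prefix_sum (\<sigma> (p i)) x" for i x
  have "chamber (connected_subsets E) x0 = {x. \<forall>i. 0 < g i x}"
  proof (intro set_eqI)
    have all_p: "(\<forall>t<CARD('n). P t) \<longleftrightarrow> (\<forall>i. P (p i))" for P
      using p_less p_vertex by metis
    fix x
    show "x \<in> chamber (connected_subsets E) x0 \<longleftrightarrow> x \<in> {x. \<forall>i. 0 < g i x}"
      using same_order_iff_sorted_steps[where f = f and g = "\<lambda>k. prefix_sum k x", OF \<sigma>]
      unfolding chamber_eq f_def g_def all_p by simp
  qed
  moreover have "linear_orthant {x. \<forall>i. 0 < g i x}"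
  proof (rule linear_orthant_of_forms)
    show "linear (g i)" for i
      unfolding g_def prefix_sum_def by (intro linear_compose_sub linear_subset_sum)
    fix x assume steps: "\<And>i. g i x = 0"
    have "prefix_sum (\<sigma> t) x = prefix_sum (\<sigma> 0) x" if "t \<le> CARD('n)" for t
      using that
    proof (induction t)
      case (Suc t)
      then show ?case
        using steps[of "vertex t"] p_vertex[of t] by (simp add: g_def)
    qed simp
    moreover have "\<exists>t\<le>CARD('n). k = \<sigma> t" if "k \<le> CARD('n)" for k
      using \<sigma>(1) that by (force simp: bij_betw_def)
    ultimately show "x = 0"
      by (intro eq_0_if_prefix_sums_eq) (metis le0)
  qed
  ultimately show ?thesis
    by simp
qed

end

lemma simplicial_if_path_graph:
  assumes "is_path_graph E"
  shows "simplicial_arrangement (connected_subgraph_arrangement E)"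
proof -
  obtain p where "bij_betw p UNIV {0..<CARD('a)}" "\<And>u v. E u v \<longleftrightarrow> p u = p v + 1 \<or> p v = p u + 1"
    using assms unfolding is_path_graph_def by blast
  then interpret path_order E p
    by unfold_locales
  show ?thesis
    unfolding simplicial_connected_subgraph_arrangement_iff
    using linear_orthant_chamber open_simplicial_cone_if_linear_orthant by blast
qed

theorem theorem7p2:
  fixes E :: "'n::finite \<Rightarrow> 'n \<Rightarrow> bool"
  assumes "simple_graph E" and "graph_connected E"
  shows "simplicial_arrangement (connected_subgraph_arrangement E) \<longleftrightarrow>
           is_triangle E \<or> is_path_graph E"
proof
  assume simplicial: "simplicial_arrangement (connected_subgraph_arrangement E)"
  have sym: "\<And>x y. E x y \<Longrightarrow> E y x" and irrefl: "\<And>x. \<not> E x x"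
    using assms(1) by (auto simp: simple_graph_def)
  have degree: "x = y \<or> x = z \<or> y = z" if "E v x" "E v y" "E v z" for v x y z
  proof (rule ccontr)
    assume "\<not> (x = y \<or> x = z \<or> y = z)"
    then have "degree_three E v x y z"
      using that irrefl sym by unfold_locales blast+
    with simplicial show False
      using degree_three.not_simplicial by blast
  qed
  show "is_triangle E \<or> is_path_graph E"
    by (rule degree_two_graph_cases[OF assms degree])
      (use simplicial separating_pair.not_simplicial in blast)+
next
  assume "is_triangle E \<or> is_path_graph E"
  then show "simplicial_arrangement (connected_subgraph_arrangement E)"
    using simplicial_if_triangle simplicial_if_path_graph by blast
qed

end
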